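(* Let $K_f, M, B, P_m, P_f, k_{22}>0$, $B_f>0$, $I_m, I_f\ge 0$, $b_{22}\ge 0$ and $0\le\alpha\le 1$ be real numbers, and put $\mu=I_m/P_m$, $\nu=I_f/P_f$. Consider the two-port with hybrid matrix $H(s)=\begin{bmatrix} h_{11}&h_{12}\\ h_{21}&h_{22}\end{bmatrix}$ where $$h_{11}(s)=\frac{B_fMs^4+\big(B_f(B+P_m)+K_fM\big)s^3+\big(B_fI_m+K_f(B+P_m)\big)s^2+K_fI_ms}{a_4s^4+a_3s^3+a_2s^2+a_1s+a_0},$$ $$h_{12}(s)=\frac{B_fP_mP_fs^3+P_mP_f\big(K_f+B_f(\mu+\nu)\big)s^2+\big(B_fI_mI_f+K_fP_mP_f(\mu+\nu)\big)s+K_fI_mI_f}{a_4s^4+a_3s^3+a_2s^2+a_1s+a_0},$$ $h_{21}(s)=-1$, $h_{22}(s)=\dfrac{s}{b_{22}s+k_{22}}$, with $a_4=M$, $a_3=B+P_m+B_f(\alpha+P_mP_f)$, $a_2=I_m+K_f(\alpha+P_mP_f)+B_fP_mP_f(\mu+\nu)$, $a_1=B_fI_mI_f+K_fP_mP_f(\mu+\nu)$, $a_0=K_fI_mI_f$. Suppose that: the $h$-parameters have no poles in the open right half plane; any poles of the $h$-parameters on the imaginary axis are simple with real positive residues; and $\mathrm{Re}\,h_{11}(j\omega)\ge 0$ for all real $\omega$. If this two-port is absolutely stable, then $b_{22}>0$.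
   Context: This models a series damped elastic actuator (actuator inertia $M$, actuator damping $B$, physical spring $K_f$ in parallel with physical damper $B_f$) under velocity-sourced impedance control with PI motion controller gains $P_m,I_m$, PI force controller gains $P_f,I_f$, feed-forward parameter $\alpha$, and a virtual coupler consisting of a spring $k_{22}$ in parallel with a damper $b_{22}$. The hybrid matrix relates $(F_{\mathrm{int}},v_e)^T=H\,(-v_h,F_e)^T$. A two-port with hybrid matrix $H$ is called absolutely stable if (Llewellyn's criterion): (a) the $h$-parameters have no poles in the open right half plane; (b) any poles of the $h$-parameters on the imaginary axis are simple with real positive residues; (c) for all real $\omega$ (away from imaginary-axis poles), (i) $\mathrm{Re}\,h_{11}(j\omega)\ge 0$ and (ii) $2\,\mathrm{Re}\,h_{11}(j\omega)\,\mathrm{Re}\,h_{22}(j\omega)-\mathrm{Re}\big(h_{12}(j\omega)h_{21}(j\omega)\big)-\big|h_{12}(j\omega)h_{21}(j\omega)\big|\ge 0$. *)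

theory Defs
  imports "HOL-Complex_Analysis.Complex_Analysis"
begin

definition llewellyn_a ::
  "(complex \<Rightarrow> complex) \<Rightarrow> (complex \<Rightarrow> complex) \<Rightarrow> (complex \<Rightarrow> complex) \<Rightarrow> (complex \<Rightarrow> complex) \<Rightarrow> bool" where
  "llewellyn_a h11 h12 h21 h22 \<longleftrightarrow>
     (\<forall>h\<in>{h11, h12, h21, h22}. \<forall>z. Re z > 0 \<longrightarrow> \<not> is_pole h z)"

definition llewellyn_b ::
  "(complex \<Rightarrow> complex) \<Rightarrow> (complex \<Rightarrow> complex) \<Rightarrow> (complex \<Rightarrow> complex) \<Rightarrow> (complex \<Rightarrow> complex) \<Rightarrow> bool" where
  "llewellyn_b h11 h12 h21 h22 \<longleftrightarrow>
     (\<forall>h\<in>{h11, h12, h21, h22}. \<forall>w::real. is_pole h (\<i> * of_real w) \<longrightarrow>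
        zorder h (\<i> * of_real w) = -1 \<and>
        residue h (\<i> * of_real w) \<in> \<real> \<and> Re (residue h (\<i> * of_real w)) > 0)"

text \<open>Real frequencies "away from imaginary-axis poles": those at which every
  h-parameter (as a HOL function) is continuous.  This excludes the poles, and also
  the (finitely many) removable singularities, where HOL's convention x/0 = 0 would
  give a wrong value; by continuity nothing is lost there.\<close>
definition regular_freq ::
  "(complex \<Rightarrow> complex) \<Rightarrow> (complex \<Rightarrow> complex) \<Rightarrow> (complex \<Rightarrow> complex) \<Rightarrow> (complex \<Rightarrow> complex) \<Rightarrow> real \<Rightarrow> bool" where
  "regular_freq h11 h12 h21 h22 \<omega> \<longleftrightarrow>
     (\<forall>h\<in>{h11, h12, h21, h22}. isCont h (\<i> * of_real \<omega>))"

definition llewellyn_ci ::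
  "(complex \<Rightarrow> complex) \<Rightarrow> (complex \<Rightarrow> complex) \<Rightarrow> (complex \<Rightarrow> complex) \<Rightarrow> (complex \<Rightarrow> complex) \<Rightarrow> bool" where
  "llewellyn_ci h11 h12 h21 h22 \<longleftrightarrow>
     (\<forall>\<omega>::real. regular_freq h11 h12 h21 h22 \<omega> \<longrightarrow> Re (h11 (\<i> * of_real \<omega>)) \<ge> 0)"

definition llewellyn_cii ::
  "(complex \<Rightarrow> complex) \<Rightarrow> (complex \<Rightarrow> complex) \<Rightarrow> (complex \<Rightarrow> complex) \<Rightarrow> (complex \<Rightarrow> complex) \<Rightarrow> bool" where
  "llewellyn_cii h11 h12 h21 h22 \<longleftrightarrow>
     (\<forall>\<omega>::real. regular_freq h11 h12 h21 h22 \<omega> \<longrightarrow>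
        (let s = \<i> * of_real \<omega> in
          2 * Re (h11 s) * Re (h22 s) - Re (h12 s * h21 s) - cmod (h12 s * h21 s) \<ge> 0))"

definition absolutely_stable ::
  "(complex \<Rightarrow> complex) \<Rightarrow> (complex \<Rightarrow> complex) \<Rightarrow> (complex \<Rightarrow> complex) \<Rightarrow> (complex \<Rightarrow> complex) \<Rightarrow> bool" where
  "absolutely_stable h11 h12 h21 h22 \<longleftrightarrow>
     llewellyn_a h11 h12 h21 h22 \<and> llewellyn_b h11 h12 h21 h22 \<and>
     llewellyn_ci h11 h12 h21 h22 \<and> llewellyn_cii h11 h12 h21 h22"

definition sdea_den ::
  "real \<Rightarrow> real \<Rightarrow> real \<Rightarrow> real \<Rightarrow> real \<Rightarrow> real \<Rightarrow> real \<Rightarrow> real \<Rightarrow> real \<Rightarrow> complex \<Rightarrow> complex" where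
  "sdea_den Kf Bf M B Pm Imc Pf Ifc \<alpha> s =
     (let \<mu> = Imc / Pm; \<nu> = Ifc / Pf;
          a4 = M;
          a3 = B + Pm + Bf * (\<alpha> + Pm * Pf);
          a2 = Imc + Kf * (\<alpha> + Pm * Pf) + Bf * Pm * Pf * (\<mu> + \<nu>);
          a1 = Bf * Imc * Ifc + Kf * Pm * Pf * (\<mu> + \<nu>);
          a0 = Kf * Imc * Ifc
      in of_real a4 * s^4 + of_real a3 * s^3 + of_real a2 * s^2 + of_real a1 * s + of_real a0)"

definition sdea_h11 ::
  "real \<Rightarrow> real \<Rightarrow> real \<Rightarrow> real \<Rightarrow> real \<Rightarrow> real \<Rightarrow> real \<Rightarrow> real \<Rightarrow> real \<Rightarrow> complex \<Rightarrow> complex" where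
  "sdea_h11 Kf Bf M B Pm Imc Pf Ifc \<alpha> s =
     (of_real (Bf * M) * s^4 + of_real (Bf * (B + Pm) + Kf * M) * s^3
      + of_real (Bf * Imc + Kf * (B + Pm)) * s^2 + of_real (Kf * Imc) * s)
     / sdea_den Kf Bf M B Pm Imc Pf Ifc \<alpha> s"

definition sdea_h12 ::
  "real \<Rightarrow> real \<Rightarrow> real \<Rightarrow> real \<Rightarrow> real \<Rightarrow> real \<Rightarrow> real \<Rightarrow> real \<Rightarrow> real \<Rightarrow> complex \<Rightarrow> complex" where
  "sdea_h12 Kf Bf M B Pm Imc Pf Ifc \<alpha> s =
     (let \<mu> = Imc / Pm; \<nu> = Ifc / Pf in
      (of_real (Bf * Pm * Pf) * s^3 + of_real (Pm * Pf * (Kf + Bf * (\<mu> + \<nu>))) * s^2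
       + of_real (Bf * Imc * Ifc + Kf * Pm * Pf * (\<mu> + \<nu>)) * s + of_real (Kf * Imc * Ifc))
      / sdea_den Kf Bf M B Pm Imc Pf Ifc \<alpha> s)"

definition sdea_h21 :: "complex \<Rightarrow> complex" where
  "sdea_h21 s = -1"

definition sdea_h22 :: "real \<Rightarrow> real \<Rightarrow> complex \<Rightarrow> complex" where
  "sdea_h22 b22 k22 s = s / (of_real b22 * s + of_real k22)"

end

theory Submission
  imports Defs "HOL-Real_Asymp.Real_Asymp"
begin

text \<open>If \<open>b\<^sub>2\<^sub>2 = 0\<close>, then \<open>h\<^sub>2\<^sub>2(j\<omega>) = j\<omega>/k\<^sub>2\<^sub>2\<close> is purely imaginary and
  \<open>h\<^sub>2\<^sub>1 = -1\<close>, so condition (c)(ii) degenerates to \<open>Re h\<^sub>1\<^sub>2(j\<omega>) \<ge> |h\<^sub>1\<^sub>2(j\<omega>)|\<close>,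
  i.e. \<open>h\<^sub>1\<^sub>2\<close> would have to be real on the imaginary axis. But \<open>h\<^sub>1\<^sub>2\<close> is a cubic
  over a quartic with positive leading coefficients, so \<open>h\<^sub>1\<^sub>2(j\<omega>) \<sim> -j B\<^sub>f P\<^sub>m P\<^sub>f/(M\<omega>)\<close>
  has negative imaginary part for all large \<open>\<omega>\<close>.\<close>

lemma Im_eq_0_if_cmod_le_abs_Re:
  assumes "cmod z \<le> \<bar>Re z\<bar>"
  shows "Im z = 0"
proof -
  have "(Re z)\<^sup>2 + (Im z)\<^sup>2 = (cmod z)\<^sup>2"
    by (simp add: cmod_power2)
  also have "\<dots> \<le> (Re z)\<^sup>2"
    using power_mono[OF assms norm_ge_zero, of 2] by simp
  finally show ?thesis
    by simp
qed

lemma llewellyn_cii_imp_Im_eq_0: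
  assumes "llewellyn_cii h11 h12 h21 h22" and "regular_freq h11 h12 h21 h22 \<omega>"
    and "Re (h22 (\<i> * of_real \<omega>)) = 0"
  shows "Im (h12 (\<i> * of_real \<omega>) * h21 (\<i> * of_real \<omega>)) = 0"
proof (rule Im_eq_0_if_cmod_le_abs_Re)
  let ?s = "\<i> * of_real \<omega>"
  from assms(1,2) have "2 * Re (h11 ?s) * Re (h22 ?s) - Re (h12 ?s * h21 ?s) - cmod (h12 ?s * h21 ?s) \<ge> 0"
    unfolding llewellyn_cii_def Let_def by blast
  then show "cmod (h12 ?s * h21 ?s) \<le> \<bar>Re (h12 ?s * h21 ?s)\<bar>"
    unfolding assms(3) by linarith
qed

lemma cubic_imag_axis:
  "of_real n3 * (\<i> * of_real x)^3 + of_real n2 * (\<i> * of_real x)\<^sup>2 + of_real n1 * (\<i> * of_real x)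
     + of_real n0 = Complex (n0 - n2 * x\<^sup>2) (n1 * x - n3 * x^3)"
  by (simp add: complex_eq_iff power_mult_distrib power3_eq_cube)

lemma quartic_imag_axis:
  "of_real a4 * (\<i> * of_real x)^4 + of_real a3 * (\<i> * of_real x)^3 + of_real a2 * (\<i> * of_real x)\<^sup>2
     + of_real a1 * (\<i> * of_real x) + of_real a0
   = Complex (a4 * x^4 - a2 * x\<^sup>2 + a0) (a1 * x - a3 * x^3)"
proof -
  have "(\<i> * complex_of_real x)^4 = of_real (x^4)"
    by (simp add: power_mult_distrib)
  then show ?thesis
    by (simp add: complex_eq_iff power_mult_distrib power3_eq_cube)
qed

lemma eventually_Im_cubic_div_quartic_imag_axis_neg:
  fixes n3 n2 n1 n0 a4 a3 a2 a1 a0 :: real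
  assumes "n3 > 0" and "a4 > 0"
  defines "N \<equiv> \<lambda>s. of_real n3 * s^3 + of_real n2 * s\<^sup>2 + of_real n1 * s + of_real n0"
    and "D \<equiv> \<lambda>s. of_real a4 * s^4 + of_real a3 * s^3 + of_real a2 * s\<^sup>2 + of_real a1 * s + of_real a0"
  shows "\<forall>\<^sub>F x in at_top. D (\<i> * of_real x) \<noteq> 0 \<and> Im (N (\<i> * of_real x) / D (\<i> * of_real x)) < 0"
proof -
  \<comment> \<open>\<open>Im N(jx) Re D(jx) - Re N(jx) Im D(jx)\<close>, an odd polynomial with leading term \<open>-n\<^sub>3 a\<^sub>4 x\<^sup>7\<close>\<close>
  have "\<forall>\<^sub>F x in at_top.
          (n1 * x - n3 * x^3) * (a4 * x^4 - a2 * x\<^sup>2 + a0) - (n0 - n2 * x\<^sup>2) * (a1 * x - a3 * x^3) < 0"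
    using assms(1,2) by real_asymp
  then show ?thesis
  proof eventually_elim
    case (elim x)
    let ?N = "N (\<i> * of_real x)" and ?D = "D (\<i> * of_real x)"
    have numerator_neg: "Im ?N * Re ?D - Re ?N * Im ?D < 0"
      using elim by (simp add: N_def D_def cubic_imag_axis quartic_imag_axis)
    then have "?D \<noteq> 0"
      by auto
    then have "(Re ?D)\<^sup>2 + (Im ?D)\<^sup>2 > 0"
      by (simp add: complex_eq_iff sum_power2_gt_zero_iff)
    with numerator_neg \<open>?D \<noteq> 0\<close> show ?case
      by (simp add: Im_divide divide_neg_pos)
  qed
qed

lemma eventually_Im_sdea_h12_imag_axis_neg:
  assumes "Bf > 0" and "M > 0" and "Pm > 0" and "Pf > 0"
  shows "\<forall>\<^sub>F x in at_top. sdea_den Kf Bf M B Pm Imc Pf Ifc \<alpha> (\<i> * of_real x) \<noteq> 0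
           \<and> Im (sdea_h12 Kf Bf M B Pm Imc Pf Ifc \<alpha> (\<i> * of_real x)) < 0"
  unfolding sdea_h12_def sdea_den_def Let_def
  using assms by (intro eventually_Im_cubic_div_quartic_imag_axis_neg) simp_all

lemma sdea_regular_freq:
  assumes "k22 > 0" and "sdea_den Kf Bf M B Pm Imc Pf Ifc \<alpha> (\<i> * of_real \<omega>) \<noteq> 0"
  shows "regular_freq (sdea_h11 Kf Bf M B Pm Imc Pf Ifc \<alpha>) (sdea_h12 Kf Bf M B Pm Imc Pf Ifc \<alpha>)
           sdea_h21 (sdea_h22 b22 k22) \<omega>"
proof -
  have "of_real b22 * (\<i> * of_real \<omega>) + of_real k22 \<noteq> 0"
    using assms(1) by (simp add: complex_eq_iff)
  with assms(2) show ?thesis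
    unfolding regular_freq_def sdea_h11_def[abs_def] sdea_h12_def[abs_def] sdea_h21_def[abs_def]
      sdea_h22_def[abs_def] sdea_den_def[abs_def] Let_def
    by (auto intro!: continuous_intros)
qed

theorem lemma6:
  fixes Kf M B Pm Pf k22 Bf Imc Ifc b22 \<alpha> :: real
  assumes "Kf > 0" and "M > 0" and "B > 0" and "Pm > 0" and "Pf > 0" and "k22 > 0"
    and "Bf > 0" and "Imc \<ge> 0" and "Ifc \<ge> 0" and "b22 \<ge> 0"
    and "0 \<le> \<alpha>" and "\<alpha> \<le> 1"
    and "llewellyn_a (sdea_h11 Kf Bf M B Pm Imc Pf Ifc \<alpha>) (sdea_h12 Kf Bf M B Pm Imc Pf Ifc \<alpha>)
           sdea_h21 (sdea_h22 b22 k22)"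
    and "llewellyn_b (sdea_h11 Kf Bf M B Pm Imc Pf Ifc \<alpha>) (sdea_h12 Kf Bf M B Pm Imc Pf Ifc \<alpha>)
           sdea_h21 (sdea_h22 b22 k22)"
    and "llewellyn_ci (sdea_h11 Kf Bf M B Pm Imc Pf Ifc \<alpha>) (sdea_h12 Kf Bf M B Pm Imc Pf Ifc \<alpha>)
           sdea_h21 (sdea_h22 b22 k22)"
    and "absolutely_stable (sdea_h11 Kf Bf M B Pm Imc Pf Ifc \<alpha>) (sdea_h12 Kf Bf M B Pm Imc Pf Ifc \<alpha>)
           sdea_h21 (sdea_h22 b22 k22)"
  shows "b22 > 0"
proof (rule ccontr)
  assume "\<not> b22 > 0"
  with \<open>b22 \<ge> 0\<close> have "b22 = 0"
    by simp
  obtain \<omega> where den: "sdea_den Kf Bf M B Pm Imc Pf Ifc \<alpha> (\<i> * of_real \<omega>) \<noteq> 0"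
    and Im_neg: "Im (sdea_h12 Kf Bf M B Pm Imc Pf Ifc \<alpha> (\<i> * of_real \<omega>)) < 0"
    using eventually_happens'[OF trivial_limit_at_top_linorder
        eventually_Im_sdea_h12_imag_axis_neg[OF \<open>Bf > 0\<close> \<open>M > 0\<close> \<open>Pm > 0\<close> \<open>Pf > 0\<close>]]
    by blast
  have "Re (sdea_h22 b22 k22 (\<i> * of_real \<omega>)) = 0"
    using \<open>b22 = 0\<close> by (simp add: sdea_h22_def)
  then have "Im (sdea_h12 Kf Bf M B Pm Imc Pf Ifc \<alpha> (\<i> * of_real \<omega>) * sdea_h21 (\<i> * of_real \<omega>)) = 0"
    using assms(16) sdea_regular_freq[OF \<open>k22 > 0\<close> den]
    by (intro llewellyn_cii_imp_Im_eq_0) (auto simp: absolutely_stable_def)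
  with Im_neg show False
    by (simp add: sdea_h21_def)
qed

end
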